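(* Consider the multi-level, multi-user caching problem described in the context, with $K$ caches, $L$ levels, and parameters $\{N_i,U_i\}_{i=1}^L$. Let $b$ be a positive integer, $t\in\{1,\dots,K\}$, and for every level $i$ let $s_i\in\{1,\dots,\lfloor K/(2t)\rfloor\}$. Then for every memory $M\ge0$, \[ R^\ast(M)\ge\sum_{i=1}^L\min\Big\{s_itU_i,\;\frac{N_i}{s_ib}\Big\}-\frac tb\,M. \]
   Context: Multi-level, multi-user caching problem. A server holds $\sum_{i=1}^L N_i$ files, each of $F$ bits, partitioned into $L$ popularity levels, level $i$ consisting of $N_i$ files. There are $K$ caches, each able to store $MF$ bits. In a placement phase (before requests are known) arbitrary functions of the files are stored in the caches. Then, for each level $i$ and each cache, exactly $U_i$ users are connected to that cache and each of them requests an arbitrary file of level $i$. The server then sends one broadcast message of $RF$ bits heard by all users, and each user must recover its requested file from the broadcast and the contents of its cache. A pair $(R,M)$ is achievable if there is a placement-and-delivery strategy with caches of memory $M$ that, for every admissible demand, uses a broadcast of rate at most $R$ satisfying all requests (with vanishing error probability as $F\to\infty$). The optimal rate is $R^\ast(M)=\inf\{R:(R,M)\text{ achievable}\}$. Standing assumptions of the setup: $N_i\ge KU_i$ for all $i$, and, with $\beta=1/80$, for distinct levels $i,j$ with $U_i/N_i\ge U_j/N_j$, $\frac{U_i/N_i}{U_j/N_j}\ge1/\beta^2$. *)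

theory Defs
  imports Complex_Main
begin

text \<open>Levels are indexed by 1..L, caches by 0..<K, users of level i at a cache by 0..<U i.
  File n of level i (n < N i) is indexed by the pair (i, n).  A library assigns to every
  file a bit string (bool list) of length F; libraries are uniformly distributed, so error
  probabilities are ratios of cardinalities.\<close>

type_synonym library = "nat \<times> nat \<Rightarrow> bool list"
type_synonym demand = "nat \<Rightarrow> nat \<Rightarrow> nat \<Rightarrow> nat"
  \<comment> \<open>d i k u = index (within level i) of the file requested by user u of level i at cache k\<close>

definition files :: "nat \<Rightarrow> (nat \<Rightarrow> nat) \<Rightarrow> (nat \<times> nat) set" where
  "files L N = {(i, n). i \<in> {1..L} \<and> n < N i}"

definition libraries :: "nat \<Rightarrow> (nat \<Rightarrow> nat) \<Rightarrow> nat \<Rightarrow> library set" where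
  "libraries L N F = {lib. (\<forall>x\<in>files L N. length (lib x) = F) \<and> (\<forall>x. x \<notin> files L N \<longrightarrow> lib x = [])}"

definition admissible_demand :: "nat \<Rightarrow> nat \<Rightarrow> (nat \<Rightarrow> nat) \<Rightarrow> (nat \<Rightarrow> nat) \<Rightarrow> demand \<Rightarrow> bool" where
  "admissible_demand K L N U d = (\<forall>i\<in>{1..L}. \<forall>k<K. \<forall>u<U i. d i k u < N i)"

definition decoding_error ::
  "nat \<Rightarrow> nat \<Rightarrow> (nat \<Rightarrow> nat) \<Rightarrow> library \<Rightarrow> (nat \<Rightarrow> library \<Rightarrow> bool list)
   \<Rightarrow> (demand \<Rightarrow> library \<Rightarrow> bool list)
   \<Rightarrow> (demand \<Rightarrow> nat \<Rightarrow> nat \<Rightarrow> nat \<Rightarrow> bool list \<Rightarrow> bool list \<Rightarrow> bool list) \<Rightarrow> demand \<Rightarrow> bool" where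
  "decoding_error K L U lib \<phi> \<psi> \<mu> d =
     (\<exists>i\<in>{1..L}. \<exists>k<K. \<exists>u<U i. \<mu> d i k u (\<psi> d lib) (\<phi> k lib) \<noteq> lib (i, d i k u))"

definition error_prob ::
  "nat \<Rightarrow> nat \<Rightarrow> (nat \<Rightarrow> nat) \<Rightarrow> (nat \<Rightarrow> nat) \<Rightarrow> nat \<Rightarrow> (nat \<Rightarrow> library \<Rightarrow> bool list)
   \<Rightarrow> (demand \<Rightarrow> library \<Rightarrow> bool list)
   \<Rightarrow> (demand \<Rightarrow> nat \<Rightarrow> nat \<Rightarrow> nat \<Rightarrow> bool list \<Rightarrow> bool list \<Rightarrow> bool list) \<Rightarrow> demand \<Rightarrow> real" where
  "error_prob K L N U F \<phi> \<psi> \<mu> d =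
     real (card {lib \<in> libraries L N F. decoding_error K L U lib \<phi> \<psi> \<mu> d})
     / real (card (libraries L N F))"

text \<open>A scheme with file size F, memory M, rate R and (worst-case over demands) error
  probability at most eps: placement \<phi> (cache contents, functions of the files only),
  delivery \<psi> (broadcast, function of demand and files), decoders \<mu> (each user decodes
  from the broadcast and its own cache; the decoder may depend on the demand).\<close>

definition caching_scheme ::
  "nat \<Rightarrow> nat \<Rightarrow> (nat \<Rightarrow> nat) \<Rightarrow> (nat \<Rightarrow> nat) \<Rightarrow> nat \<Rightarrow> real \<Rightarrow> real
   \<Rightarrow> (nat \<Rightarrow> library \<Rightarrow> bool list)
   \<Rightarrow> (demand \<Rightarrow> library \<Rightarrow> bool list)
   \<Rightarrow> (demand \<Rightarrow> nat \<Rightarrow> nat \<Rightarrow> nat \<Rightarrow> bool list \<Rightarrow> bool list \<Rightarrow> bool list) \<Rightarrow> real \<Rightarrow> bool" where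
  "caching_scheme K L N U F M R \<phi> \<psi> \<mu> eps =
     ((\<forall>k<K. \<forall>lib\<in>libraries L N F. int (length (\<phi> k lib)) \<le> \<lfloor>M * real F\<rfloor>) \<and>
      (\<forall>d. admissible_demand K L N U d \<longrightarrow>
         (\<forall>lib\<in>libraries L N F. int (length (\<psi> d lib)) \<le> \<lfloor>R * real F\<rfloor>)) \<and>
      (\<forall>d. admissible_demand K L N U d \<longrightarrow> error_prob K L N U F \<phi> \<psi> \<mu> d \<le> eps))"

definition achievable :: "nat \<Rightarrow> nat \<Rightarrow> (nat \<Rightarrow> nat) \<Rightarrow> (nat \<Rightarrow> nat) \<Rightarrow> real \<Rightarrow> real \<Rightarrow> bool" where
  "achievable K L N U R M =
     (\<forall>eps>0. \<exists>F0. \<forall>F\<ge>F0. \<exists>\<phi> \<psi> \<mu>. caching_scheme K L N U F M R \<phi> \<psi> \<mu> eps)"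

definition opt_rate :: "nat \<Rightarrow> nat \<Rightarrow> (nat \<Rightarrow> nat) \<Rightarrow> (nat \<Rightarrow> nat) \<Rightarrow> real \<Rightarrow> real" where
  "opt_rate K L N U M = Inf {R. achievable K L N U R M}"

end

theory Submission
  imports Defs "HOL-Library.FuncSet"
begin

text \<open>Fix a scheme with small error and draw the library uniformly from those for which every
  demand of the pattern below is decoded correctly; these are at least half of all libraries, so the
  files stay uniform and independent up to one bit.  The caches are split into \<open>K div t\<close> groups of
  \<open>t\<close>, and there are \<open>n = (K div t) * (\<Prod>i. s i)\<close> rounds.  The observation \<open>Y\<^sub>j\<close> of round \<open>j\<close>
  consists of its \<open>b\<close> broadcasts and the \<open>t\<close> cache contents of one group, so
  \<open>H(Y\<^sub>j) \<le> (b R + t M) F\<close> up to rounding.  The demands are arranged so that every cyclic window of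
  \<open>s i\<close> consecutive rounds determines \<open>min (s i * t * s i * b * U i) (N i)\<close> files of level \<open>i\<close>.
  By submodularity of entropy the total entropy of all windows divided by their length decreases with
  the length; peeling off the levels in the order of increasing \<open>s i\<close>, each level contributes
  \<open>n / s i\<close> times the entropy \<open>F\<close> per file of its decodable files, and the total is at most
  \<open>\<Sum>\<^sub>j H(Y\<^sub>j)\<close>.  Dividing by \<open>n b F\<close> and letting \<open>F\<close> grow gives the bound.\<close>

section \<open>Entropy of the uniform distribution on a finite set\<close>

definition fiber_card :: "'l set \<Rightarrow> ('l \<Rightarrow> 'a) \<Rightarrow> 'l \<Rightarrow> nat" where
  "fiber_card G X g = card {g'\<in>G. X g' = X g}"

text \<open>Shannon entropy in bits of \<open>X\<close> for \<open>g\<close> uniform on \<open>G\<close>: the value \<open>X g\<close> has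
  probability \<open>fiber_card G X g / card G\<close>.\<close>

definition entropy :: "'l set \<Rightarrow> ('l \<Rightarrow> 'a) \<Rightarrow> real" where
  "entropy G X = (\<Sum>g\<in>G. log 2 (real (card G) / real (fiber_card G X g))) / real (card G)"

lemma fiber_card_pos: "finite G \<Longrightarrow> g \<in> G \<Longrightarrow> 0 < fiber_card G X g"
  unfolding fiber_card_def by (auto simp: card_gt_0_iff)

lemma fiber_card_le: "finite G \<Longrightarrow> fiber_card G X g \<le> card G"
  unfolding fiber_card_def by (rule card_mono) auto

lemma entropy_nonneg:
  assumes "finite G"
  shows "0 \<le> entropy G X"
proof -
  have "0 \<le> log 2 (real (card G) / real (fiber_card G X g))" if "g \<in> G" for g
  proof -
    have "1 \<le> real (card G) / real (fiber_card G X g)"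
      using fiber_card_pos[OF assms that, of X] fiber_card_le[OF assms, of X g] by simp
    then show ?thesis by simp
  qed
  then show ?thesis
    unfolding entropy_def by (intro divide_nonneg_nonneg sum_nonneg) auto
qed

lemma entropy_le_of_determined:
  assumes fin: "finite G" and det: "\<forall>g\<in>G. \<forall>g'\<in>G. Y g = Y g' \<longrightarrow> X g = X g'"
  shows "entropy G X \<le> entropy G Y"
proof -
  have "log 2 (real (card G) / real (fiber_card G X g))
      \<le> log 2 (real (card G) / real (fiber_card G Y g))" if g: "g \<in> G" for g
  proof -
    have sub: "fiber_card G Y g \<le> fiber_card G X g"
      unfolding fiber_card_def
    proof (rule card_mono)
      show "finite {g' \<in> G. X g' = X g}" using fin by simp
      show "{g' \<in> G. Y g' = Y g} \<subseteq> {g' \<in> G. X g' = X g}" using det g by blast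
    qed
    have pY: "0 < fiber_card G Y g" by (rule fiber_card_pos[OF fin g])
    have cG: "0 < card G" using fin g card_gt_0_iff by blast
    have "real (card G) / real (fiber_card G X g) \<le> real (card G) / real (fiber_card G Y g)"
      using sub pY cG by (intro divide_left_mono) auto
    moreover have "0 < real (card G) / real (fiber_card G X g)"
      using sub pY cG by simp
    ultimately show ?thesis using pY cG by simp
  qed
  then have "(\<Sum>g\<in>G. log 2 (real (card G) / real (fiber_card G X g)))
      \<le> (\<Sum>g\<in>G. log 2 (real (card G) / real (fiber_card G Y g)))"
    by (rule sum_mono)
  then show ?thesis unfolding entropy_def by (rule divide_right_mono) simp
qed

lemma entropy_cong:
  assumes "finite G" and "\<forall>g\<in>G. \<forall>g'\<in>G. Y g = Y g' \<longleftrightarrow> X g = X g'"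
  shows "entropy G X = entropy G Y"
  using entropy_le_of_determined[OF assms(1), of Y X] entropy_le_of_determined[OF assms(1), of X Y]
    assms(2) by (meson order_antisym)

lemma entropy_const: "entropy G (\<lambda>_. c) = 0"
  unfolding entropy_def fiber_card_def by simp

lemma entropy_inj:
  assumes "finite G" "inj_on X G"
  shows "entropy G X = log 2 (real (card G))"
proof -
  have "fiber_card G X g = 1" if "g \<in> G" for g
  proof -
    have "{g'\<in>G. X g' = X g} = {g}" using assms(2) that by (auto dest: inj_onD)
    then show ?thesis unfolding fiber_card_def by simp
  qed
  then show ?thesis unfolding entropy_def
    by (cases "card G = 0") (auto simp: card_eq_0_iff log_def)
qed

lemma sum_inverse_fiber_card:
  assumes fin: "finite G"
  shows "(\<Sum>g\<in>G. 1 / real (fiber_card G X g)) = real (card (X ` G))"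
proof -
  have "(\<Sum>g\<in>G. 1 / real (fiber_card G X g))
      = (\<Sum>v\<in>X ` G. \<Sum>g\<in>{g\<in>G. X g = v}. 1 / real (fiber_card G X g))"
    using fin by (rule sum.image_gen)
  also have "\<dots> = (\<Sum>v\<in>X ` G. 1)"
  proof (rule sum.cong[OF refl])
    fix v assume v: "v \<in> X ` G"
    have "(\<Sum>g\<in>{g\<in>G. X g = v}. 1 / real (fiber_card G X g))
        = (\<Sum>g\<in>{g\<in>G. X g = v}. 1 / real (card {g\<in>G. X g = v}))"
      by (rule sum.cong[OF refl]) (simp add: fiber_card_def)
    also have "\<dots> = 1" using v fin by (auto simp: card_gt_0_iff)
    finally show "(\<Sum>g\<in>{g\<in>G. X g = v}. 1 / real (fiber_card G X g)) = 1" .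
  qed
  finally show ?thesis by simp
qed

lemma log2_le_linear: "0 < x \<Longrightarrow> log 2 x \<le> (x - 1) / ln 2"
  unfolding log_def by (intro divide_right_mono ln_le_minus_one) auto

lemma entropy_le_log_card_image:
  assumes fin: "finite G" and ne: "G \<noteq> {}"
  shows "entropy G X \<le> log 2 (real (card (X ` G)))"
proof -
  define V where "V = real (card (X ` G))"
  define n where "n = real (card G)"
  have pos: "0 < V" "0 < n" unfolding V_def n_def using fin ne by (simp_all add: card_gt_0_iff)
  have "log 2 (n / real (fiber_card G X g)) - log 2 V
      \<le> (n / (real (fiber_card G X g) * V) - 1) / ln 2" if g: "g \<in> G" for g
  proof -
    have c: "0 < real (fiber_card G X g)" using fiber_card_pos[OF fin g] by simp
    have "log 2 (n / real (fiber_card G X g)) - log 2 V = log 2 (n / (real (fiber_card G X g) * V))"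
      using c pos by (simp add: log_divide log_mult)
    also have "\<dots> \<le> (n / (real (fiber_card G X g) * V) - 1) / ln 2"
      using c pos by (intro log2_le_linear) simp
    finally show ?thesis .
  qed
  then have "(\<Sum>g\<in>G. log 2 (n / real (fiber_card G X g)) - log 2 V)
      \<le> (\<Sum>g\<in>G. (n / (real (fiber_card G X g) * V) - 1) / ln 2)"
    by (rule sum_mono)
  also have "\<dots> = ((n / V) * (\<Sum>g\<in>G. 1 / real (fiber_card G X g)) - n) / ln 2"
    by (simp add: sum_divide_distrib[symmetric] sum_subtractf sum_distrib_left n_def mult.commute)
  also have "\<dots> = 0" using sum_inverse_fiber_card[OF fin, of X] pos unfolding V_def by simp
  finally have "(\<Sum>g\<in>G. log 2 (n / real (fiber_card G X g))) \<le> n * log 2 V"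
    by (simp add: sum_subtractf n_def)
  then show ?thesis unfolding entropy_def n_def[symmetric] V_def[symmetric] using pos
    by (simp add: divide_le_eq mult.commute)
qed

lemma fiber_card_product:
  assumes fin: "finite G"
  shows "real (fiber_card G (\<lambda>g. (X g, Z g)) g) * real (fiber_card G (\<lambda>g. (Y g, Z g)) g)
    = (\<Sum>g1\<in>G. \<Sum>g2\<in>G. if X g1 = X g \<and> Y g2 = Y g \<and> Z g1 = Z g \<and> Z g2 = Z g then 1 else 0)"
proof -
  have count: "real (card {x\<in>G. P x}) = (\<Sum>x\<in>G. if P x then 1 else 0)" for P
    using fin by (simp add: sum.inter_filter[symmetric])
  show ?thesis
    unfolding fiber_card_def count sum_product by (intro sum.cong refl) auto
qed

lemma sum_over_joint_fiber_le:
  assumes fin: "finite G" and g1: "g1 \<in> G"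
  shows "(\<Sum>g\<in>G. if X g1 = X g \<and> Y g2 = Y g \<and> Z g1 = Z g \<and> Z g2 = Z g
            then 1 / (real (fiber_card G (\<lambda>g. (X g, Y g, Z g)) g) * real (fiber_card G Z g)) else 0)
    \<le> (if Z g2 = Z g1 then 1 / real (fiber_card G Z g1) else 0)"
proof (cases "Z g2 = Z g1")
  case False
  then show ?thesis by (subst sum.neutral) auto
next
  case True
  define E where "E = {g\<in>G. X g1 = X g \<and> Y g2 = Y g \<and> Z g1 = Z g \<and> Z g2 = Z g}"
  have joint: "fiber_card G (\<lambda>g. (X g, Y g, Z g)) g = card E" if "g \<in> E" for g
    using that True unfolding fiber_card_def E_def by (intro arg_cong[where f = card]) auto
  have marginal: "fiber_card G Z g = fiber_card G Z g1" if "g \<in> E" for g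
    using that unfolding fiber_card_def E_def by auto
  have "(\<Sum>g\<in>G. if X g1 = X g \<and> Y g2 = Y g \<and> Z g1 = Z g \<and> Z g2 = Z g
            then 1 / (real (fiber_card G (\<lambda>g. (X g, Y g, Z g)) g) * real (fiber_card G Z g)) else 0)
      = (\<Sum>g\<in>E. 1 / (real (fiber_card G (\<lambda>g. (X g, Y g, Z g)) g) * real (fiber_card G Z g)))"
    unfolding E_def using fin by (simp add: sum.inter_filter)
  also have "\<dots> = real (card E) * (1 / (real (card E) * real (fiber_card G Z g1)))"
    using joint marginal by simp
  also have "\<dots> \<le> 1 / real (fiber_card G Z g1)"
    by (cases "card E = 0") auto
  finally show ?thesis using True by simp
qed

text \<open>The summand is the likelihood ratio \<open>P(X,Z) P(Y,Z) / (P(X,Y,Z) P(Z))\<close>; its mean is at most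
  \<open>1\<close>, which together with \<open>ln x \<le> x - 1\<close> gives submodularity.\<close>

lemma sum_fiber_card_ratio_le:
  assumes fin: "finite G"
  shows "(\<Sum>g\<in>G. real (fiber_card G (\<lambda>g. (X g, Z g)) g) * real (fiber_card G (\<lambda>g. (Y g, Z g)) g)
      / (real (fiber_card G (\<lambda>g. (X g, Y g, Z g)) g) * real (fiber_card G Z g))) \<le> real (card G)"
proof -
  define f where "f g = 1 / (real (fiber_card G (\<lambda>g. (X g, Y g, Z g)) g) * real (fiber_card G Z g))"
    for g
  define cond where "cond g g1 g2 \<longleftrightarrow> X g1 = X g \<and> Y g2 = Y g \<and> Z g1 = Z g \<and> Z g2 = Z g"
    for g g1 g2
  have "(\<Sum>g\<in>G. real (fiber_card G (\<lambda>g. (X g, Z g)) g) * real (fiber_card G (\<lambda>g. (Y g, Z g)) g)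
      / (real (fiber_card G (\<lambda>g. (X g, Y g, Z g)) g) * real (fiber_card G Z g)))
      = (\<Sum>g\<in>G. \<Sum>g1\<in>G. \<Sum>g2\<in>G. if cond g g1 g2 then f g else 0)"
    unfolding fiber_card_product[OF fin] sum_divide_distrib f_def cond_def
    by (intro sum.cong refl) simp
  also have "\<dots> = (\<Sum>g1\<in>G. \<Sum>g2\<in>G. \<Sum>g\<in>G. if cond g g1 g2 then f g else 0)"
    by (subst sum.swap) (intro sum.cong refl sum.swap)
  also have "\<dots> \<le> (\<Sum>g1\<in>G. \<Sum>g2\<in>G. if Z g2 = Z g1 then 1 / real (fiber_card G Z g1) else 0)"
    unfolding cond_def f_def by (intro sum_mono sum_over_joint_fiber_le[OF fin])
  also have "\<dots> = (\<Sum>g1\<in>G. 1)"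
  proof (rule sum.cong[OF refl])
    fix g1 assume g1: "g1 \<in> G"
    have "(\<Sum>g2\<in>G. if Z g2 = Z g1 then 1 / real (fiber_card G Z g1) else 0)
        = real (fiber_card G Z g1) * (1 / real (fiber_card G Z g1))"
      unfolding fiber_card_def using fin by (simp add: sum.If_cases[OF fin] Int_def)
    also have "\<dots> = 1" using fiber_card_pos[OF fin g1, of Z] by simp
    finally show "(\<Sum>g2\<in>G. if Z g2 = Z g1 then 1 / real (fiber_card G Z g1) else 0) = 1" .
  qed
  finally show ?thesis by simp
qed

lemma entropy_submodular:
  fixes X :: "'l \<Rightarrow> 'a" and Y :: "'l \<Rightarrow> 'b" and Z :: "'l \<Rightarrow> 'c"
  assumes fin: "finite G"
  shows "entropy G (\<lambda>g. (X g, Y g, Z g)) + entropy G Z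
    \<le> entropy G (\<lambda>g. (X g, Z g)) + entropy G (\<lambda>g. (Y g, Z g))"
proof (cases "G = {}")
  case True then show ?thesis by (simp add: entropy_def)
next
  case False
  define n where "n = real (card G)"
  have npos: "0 < n" unfolding n_def using fin False by (simp add: card_gt_0_iff)
  define a where "a g = real (fiber_card G (\<lambda>g. (X g, Y g, Z g)) g)" for g
  define b where "b g = real (fiber_card G (\<lambda>g. (X g, Z g)) g)" for g
  define c where "c g = real (fiber_card G (\<lambda>g. (Y g, Z g)) g)" for g
  define d where "d g = real (fiber_card G Z g)" for g
  have "log 2 (n / a g) + log 2 (n / d g) - log 2 (n / b g) - log 2 (n / c g)
      \<le> (b g * c g / (a g * d g) - 1) / ln 2" if g: "g \<in> G" for g
  proof -
    have pos: "0 < a g" "0 < b g" "0 < c g" "0 < d g"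
      unfolding a_def b_def c_def d_def using fiber_card_pos[OF fin g] by simp_all
    then have "log 2 (n / a g) + log 2 (n / d g) - log 2 (n / b g) - log 2 (n / c g)
        = log 2 (b g * c g / (a g * d g))"
      using npos by (simp add: log_divide log_mult)
    also have "\<dots> \<le> (b g * c g / (a g * d g) - 1) / ln 2"
      using pos by (intro log2_le_linear) simp
    finally show ?thesis .
  qed
  then have "(\<Sum>g\<in>G. log 2 (n / a g) + log 2 (n / d g) - log 2 (n / b g) - log 2 (n / c g))
      \<le> (\<Sum>g\<in>G. (b g * c g / (a g * d g) - 1) / ln 2)"
    by (rule sum_mono)
  also have "\<dots> = ((\<Sum>g\<in>G. b g * c g / (a g * d g)) - n) / ln 2"
    by (simp add: sum_divide_distrib[symmetric] sum_subtractf n_def)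
  also have "\<dots> \<le> 0"
    using sum_fiber_card_ratio_le[OF fin, of X Z Y]
    unfolding a_def b_def c_def d_def n_def by (simp add: divide_nonpos_pos)
  finally have "(\<Sum>g\<in>G. log 2 (n / a g)) + (\<Sum>g\<in>G. log 2 (n / d g))
      \<le> (\<Sum>g\<in>G. log 2 (n / b g)) + (\<Sum>g\<in>G. log 2 (n / c g))"
    by (simp add: sum.distrib sum_subtractf)
  then show ?thesis
    unfolding entropy_def n_def[symmetric] a_def[symmetric] b_def[symmetric]
      c_def[symmetric] d_def[symmetric]
    using npos by (simp add: add_divide_distrib[symmetric] divide_right_mono)
qed

lemma entropy_subadditive:
  assumes fin: "finite G"
  shows "entropy G (\<lambda>g. (X g, Y g)) \<le> entropy G X + entropy G Y"
proof -
  have "entropy G (\<lambda>g. (X g, Y g, ())) + entropy G (\<lambda>g. ())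
      \<le> entropy G (\<lambda>g. (X g, ())) + entropy G (\<lambda>g. (Y g, ()))"
    by (rule entropy_submodular[OF fin])
  moreover have "entropy G (\<lambda>g. (X g, Y g, ())) = entropy G (\<lambda>g. (X g, Y g))"
    "entropy G (\<lambda>g. (X g, ())) = entropy G X" "entropy G (\<lambda>g. (Y g, ())) = entropy G Y"
    by (rule entropy_cong[OF fin]; simp)+
  ultimately show ?thesis using entropy_const[of G "()"] by simp
qed

section \<open>Submodular functions on cyclic windows\<close>

lemma concave_seq_chord_le:
  fixes a :: "nat \<Rightarrow> real"
  assumes a0: "a 0 = 0"
    and concave: "\<And>k. 1 \<le> k \<Longrightarrow> k + 1 \<le> n \<Longrightarrow> a (k + 1) + a (k - 1) \<le> 2 * a k"
  shows "1 \<le> k \<Longrightarrow> k + 1 \<le> n \<Longrightarrow> real k * a (k + 1) \<le> real (k + 1) * a k"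
proof (induction k rule: nat_induct_at_least)
  case base
  then show ?case using concave[of 1] a0 by simp
next
  case (Suc k)
  have IH: "real k * a (k + 1) \<le> real (k + 1) * a k" using Suc by simp
  have "a (k + 2) + a k \<le> 2 * a (k + 1)" using concave[of "k + 1"] Suc by simp
  then have "real (k + 1) * a (k + 2) \<le> real (k + 1) * (2 * a (k + 1) - a k)"
    by (intro mult_left_mono) auto
  also have "\<dots> \<le> real (k + 2) * a (k + 1)" using IH by (simp add: algebra_simps)
  finally show ?case by (simp add: add.commute)
qed

lemma concave_seq_ratio_antimono:
  fixes a :: "nat \<Rightarrow> real"
  assumes a0: "a 0 = 0"
    and concave: "\<And>k. 1 \<le> k \<Longrightarrow> k + 1 \<le> n \<Longrightarrow> a (k + 1) + a (k - 1) \<le> 2 * a k"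
    and "1 \<le> k" "k \<le> k'" "k' \<le> n"
  shows "a k' / real k' \<le> a k / real k"
  using assms(4,5)
proof (induction k' rule: dec_induct)
  case base then show ?case by simp
next
  case (step m)
  have "1 \<le> m" using assms(3) step by simp
  moreover have "real m * a (m + 1) \<le> real (m + 1) * a m"
    using concave_seq_chord_le[of a n m] a0 concave \<open>1 \<le> m\<close> step by simp
  ultimately have "a (Suc m) / real (Suc m) \<le> a m / real m"
    by (simp add: divide_simps mult.commute)
  then show ?case using step by simp
qed

definition cyc_window :: "nat \<Rightarrow> nat \<Rightarrow> nat \<Rightarrow> nat set" where
  "cyc_window n w k = (\<lambda>x. (w + x) mod n) ` {..<k}"

lemma cyc_window_0 [simp]: "cyc_window n w 0 = {}"
  unfolding cyc_window_def by simp

lemma mod_add_left_cancel_less: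
  fixes w x y n :: nat
  assumes eq: "(w + x) mod n = (w + y) mod n" and "x < n" "y < n"
  shows "x = y"
proof -
  have "(int w + int x) mod int n = (int w + int y) mod int n"
    using eq by (metis of_nat_add of_nat_mod)
  then have "((int w + int x) - int w) mod int n = ((int w + int y) - int w) mod int n"
    by (rule mod_diff_cong) simp
  then show ?thesis using assms(2,3) by simp
qed

lemma cyc_window_union:
  "1 \<le> k \<Longrightarrow> cyc_window n w k \<union> cyc_window n (Suc w) k = cyc_window n w (Suc k)"
  unfolding cyc_window_def
proof (intro equalityI subsetI)
  fix y assume "y \<in> (\<lambda>x. (w + x) mod n) ` {..<k} \<union> (\<lambda>x. (Suc w + x) mod n) ` {..<k}"
  then show "y \<in> (\<lambda>x. (w + x) mod n) ` {..<Suc k}"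
    by (auto intro: image_eqI[where x = "Suc _"])
next
  fix y assume k: "1 \<le> k" and "y \<in> (\<lambda>x. (w + x) mod n) ` {..<Suc k}"
  then obtain x where x: "x < Suc k" "y = (w + x) mod n" by auto
  show "y \<in> (\<lambda>x. (w + x) mod n) ` {..<k} \<union> (\<lambda>x. (Suc w + x) mod n) ` {..<k}"
  proof (cases x)
    case 0 then show ?thesis using x k by (intro UnI1 image_eqI[where x = 0]) auto
  next
    case (Suc x') then show ?thesis using x by (auto intro!: image_eqI[where x = x'])
  qed
qed

lemma cyc_window_inter:
  assumes "1 \<le> k" and "k + 1 \<le> n"
  shows "cyc_window n w k \<inter> cyc_window n (Suc w) k = cyc_window n (Suc w) (k - 1)"
  unfolding cyc_window_def
proof (intro equalityI subsetI)
  fix y assume "y \<in> (\<lambda>x. (w + x) mod n) ` {..<k} \<inter> (\<lambda>x. (Suc w + x) mod n) ` {..<k}"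
  then obtain x x' where x: "x < k" "y = (w + x) mod n" and x': "x' < k" "y = (w + Suc x') mod n"
    by auto
  have "x = Suc x'"
    using x x' assms by (intro mod_add_left_cancel_less[of w x n "Suc x'"]) auto
  then show "y \<in> (\<lambda>x. (Suc w + x) mod n) ` {..<k - 1}" using x x' by auto
next
  fix y assume "y \<in> (\<lambda>x. (Suc w + x) mod n) ` {..<k - 1}"
  then obtain x where x: "x < k - 1" "y = (Suc w + x) mod n" by blast
  then show "y \<in> (\<lambda>x. (w + x) mod n) ` {..<k} \<inter> (\<lambda>x. (Suc w + x) mod n) ` {..<k}"
    by (auto intro: image_eqI[where x = "Suc x"] image_eqI[where x = x])
qed

lemma sum_cyc_window_Suc:
  fixes f :: "nat set \<Rightarrow> 'a::cancel_comm_monoid_add"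
  shows "(\<Sum>w<n. f (cyc_window n (Suc w) k)) = (\<Sum>w<n. f (cyc_window n w k))"
proof -
  have "cyc_window n n k = cyc_window n 0 k" unfolding cyc_window_def by simp
  then show ?thesis
    using sum.lessThan_Suc_shift[of "\<lambda>w. f (cyc_window n w k)" n]
    by (simp add: add.commute)
qed

text \<open>Submodularity applied to the overlapping windows starting at \<open>w\<close> and \<open>w + 1\<close> makes the
  total over all windows a concave function of the window length.\<close>

lemma submodular_window_average_antimono:
  fixes h :: "nat set \<Rightarrow> real"
  assumes submod: "\<And>A B. h (A \<union> B) + h (A \<inter> B) \<le> h A + h B"
    and h0: "h {} = 0"
    and "1 \<le> k" "k \<le> k'" "k' \<le> n"
  shows "(\<Sum>w<n. h (cyc_window n w k')) / real k' \<le> (\<Sum>w<n. h (cyc_window n w k)) / real k"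
proof -
  define a where "a k = (\<Sum>w<n. h (cyc_window n w k))" for k
  have "a (k + 1) + a (k - 1) \<le> 2 * a k" if "1 \<le> k" "k + 1 \<le> n" for k
  proof -
    have "h (cyc_window n w (Suc k)) + h (cyc_window n (Suc w) (k - 1))
        \<le> h (cyc_window n w k) + h (cyc_window n (Suc w) k)" for w
      using submod[of "cyc_window n w k" "cyc_window n (Suc w) k"]
        cyc_window_union[OF that(1), of n w] cyc_window_inter[OF that, of w]
      by simp
    then have "(\<Sum>w<n. h (cyc_window n w (Suc k)) + h (cyc_window n (Suc w) (k - 1)))
        \<le> (\<Sum>w<n. h (cyc_window n w k) + h (cyc_window n (Suc w) k))"
      by (rule sum_mono)
    then show ?thesis unfolding a_def by (simp add: sum.distrib sum_cyc_window_Suc[of h])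
  qed
  moreover have "a 0 = 0" unfolding a_def using h0 by simp
  ultimately show ?thesis
    using concave_seq_ratio_antimono[of a n k k'] assms(3-5) unfolding a_def by simp
qed

text \<open>Levels are peeled off in the order of increasing window size: the windows of size \<open>s i\<close>
  determine the files \<open>T i\<close> of level \<open>i\<close>, and the previous lemma passes from windows of size \<open>k\<close>
  to the larger size \<open>s i\<close>.\<close>

lemma sum_level_gains_le_window_average:
  fixes h :: "'f set \<Rightarrow> nat set \<Rightarrow> real" and T :: "'i \<Rightarrow> 'f set" and c :: "'i \<Rightarrow> real"
    and s :: "'i \<Rightarrow> nat"
  assumes submod: "\<And>S A B. h S (A \<union> B) + h S (A \<inter> B) \<le> h S A + h S B"
    and empty: "\<And>S. h S {} = 0"
    and nonneg: "\<And>S A. 0 \<le> h S A"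
    and gain: "\<And>S i w. i \<in> I \<Longrightarrow> S \<subseteq> \<Union> (T ` (I - {i})) \<Longrightarrow> w < n \<Longrightarrow>
                  c i + h (S \<union> T i) (cyc_window n w (s i)) \<le> h S (cyc_window n w (s i))"
    and s_range: "\<And>i. i \<in> I \<Longrightarrow> 1 \<le> s i \<and> s i \<le> n"
  shows "distinct is \<Longrightarrow> sorted (map s is) \<Longrightarrow> set is \<subseteq> I \<Longrightarrow>
    S \<subseteq> \<Union> (T ` (I - set is)) \<Longrightarrow> 1 \<le> k \<Longrightarrow> (\<forall>i\<in>set is. k \<le> s i) \<Longrightarrow>
    (\<Sum>i\<leftarrow>is. real n * c i / real (s i)) \<le> (\<Sum>w<n. h S (cyc_window n w k)) / real k"
proof (induction "is" arbitrary: S k)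
  case Nil
  have "0 \<le> (\<Sum>w<n. h S (cyc_window n w k))" by (intro sum_nonneg nonneg)
  then show ?case by simp
next
  case (Cons i "is")
  have i: "i \<in> I" "1 \<le> s i" "s i \<le> n" "k \<le> s i" using Cons.prems s_range by auto
  have IH: "(\<Sum>j\<leftarrow>is. real n * c j / real (s j))
      \<le> (\<Sum>w<n. h (S \<union> T i) (cyc_window n w (s i))) / real (s i)"
    using Cons.prems i(2) by (intro Cons.IH) auto
  have "real n * c i + (\<Sum>w<n. h (S \<union> T i) (cyc_window n w (s i)))
      \<le> (\<Sum>w<n. h S (cyc_window n w (s i)))"
  proof -
    have "S \<subseteq> \<Union> (T ` (I - {i}))" using Cons.prems(4) by auto
    then have "(\<Sum>w<n. c i + h (S \<union> T i) (cyc_window n w (s i)))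
        \<le> (\<Sum>w<n. h S (cyc_window n w (s i)))"
      by (intro sum_mono gain[OF i(1)]) auto
    then show ?thesis by (simp add: sum.distrib)
  qed
  then have "real n * c i / real (s i) + (\<Sum>w<n. h (S \<union> T i) (cyc_window n w (s i))) / real (s i)
      \<le> (\<Sum>w<n. h S (cyc_window n w (s i))) / real (s i)"
    using i(2) by (simp add: add_divide_distrib[symmetric] divide_right_mono)
  also have "\<dots> \<le> (\<Sum>w<n. h S (cyc_window n w k)) / real k"
    using Cons.prems i by (intro submodular_window_average_antimono submod empty) auto
  finally show ?case using IH by simp
qed

section \<open>Conditional entropy of observations given some of the files\<close>

definition lib_restrict :: "(nat \<times> nat) set \<Rightarrow> library \<Rightarrow> library" where
  "lib_restrict S l = (\<lambda>x. if x \<in> S then l x else [])"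

definition obs_on :: "(nat \<Rightarrow> 'l \<Rightarrow> 'y) \<Rightarrow> nat set \<Rightarrow> 'l \<Rightarrow> nat \<Rightarrow> 'y option" where
  "obs_on Y A l = (\<lambda>j. if j \<in> A then Some (Y j l) else None)"

text \<open>\<open>H(Y\<^sub>A | W\<^sub>S)\<close>: the observations \<open>Y j\<close>, \<open>j \<in> A\<close>, given the files in \<open>S\<close>, for a library
  drawn uniformly from \<open>G\<close>.\<close>

definition cond_obs_entropy ::
    "library set \<Rightarrow> (nat \<Rightarrow> library \<Rightarrow> 'y) \<Rightarrow> (nat \<times> nat) set \<Rightarrow> nat set \<Rightarrow> real" where
  "cond_obs_entropy G Y S A =
     entropy G (\<lambda>l. (obs_on Y A l, lib_restrict S l)) - entropy G (lib_restrict S)"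

lemma obs_on_eq_iff: "obs_on Y A l1 = obs_on Y A l2 \<longleftrightarrow> (\<forall>j\<in>A. Y j l1 = Y j l2)"
  unfolding obs_on_def fun_eq_iff by (metis option.inject option.distinct(1))

lemma lib_restrict_eq_iff: "lib_restrict S l1 = lib_restrict S l2 \<longleftrightarrow> (\<forall>x\<in>S. l1 x = l2 x)"
  unfolding lib_restrict_def fun_eq_iff by metis

lemma cond_obs_entropy_submodular:
  assumes fin: "finite G"
  shows "cond_obs_entropy G Y S (A \<union> B) + cond_obs_entropy G Y S (A \<inter> B)
    \<le> cond_obs_entropy G Y S A + cond_obs_entropy G Y S B"
proof -
  let ?Z = "\<lambda>l. (obs_on Y (A \<inter> B) l, lib_restrict S l)"
  have "entropy G (\<lambda>l. (obs_on Y A l, obs_on Y B l, ?Z l)) + entropy G ?Z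
      \<le> entropy G (\<lambda>l. (obs_on Y A l, ?Z l)) + entropy G (\<lambda>l. (obs_on Y B l, ?Z l))"
    by (rule entropy_submodular[OF fin])
  moreover have "entropy G (\<lambda>l. (obs_on Y A l, obs_on Y B l, ?Z l))
      = entropy G (\<lambda>l. (obs_on Y (A \<union> B) l, lib_restrict S l))"
    "entropy G (\<lambda>l. (obs_on Y A l, ?Z l)) = entropy G (\<lambda>l. (obs_on Y A l, lib_restrict S l))"
    "entropy G (\<lambda>l. (obs_on Y B l, ?Z l)) = entropy G (\<lambda>l. (obs_on Y B l, lib_restrict S l))"
    by (rule entropy_cong[OF fin]; simp add: obs_on_eq_iff; blast)+
  ultimately show ?thesis unfolding cond_obs_entropy_def by simp
qed

lemma cond_obs_entropy_empty: "finite G \<Longrightarrow> cond_obs_entropy G Y S {} = 0"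
  unfolding cond_obs_entropy_def
  by (subst entropy_cong[of G _ "lib_restrict S"]) (auto simp: obs_on_eq_iff)

lemma cond_obs_entropy_nonneg: "finite G \<Longrightarrow> 0 \<le> cond_obs_entropy G Y S A"
  unfolding cond_obs_entropy_def by (simp add: entropy_le_of_determined)

lemma card_fixed_length_maps:
  assumes "finite S"
  shows "card {f::library. (\<forall>x\<in>S. length (f x) = F) \<and> (\<forall>x. x \<notin> S \<longrightarrow> f x = [])}
    = 2 ^ (F * card S)"
proof -
  let ?A = "{f::library. (\<forall>x\<in>S. length (f x) = F) \<and> (\<forall>x. x \<notin> S \<longrightarrow> f x = [])}"
  let ?B = "PiE S (\<lambda>_. {xs::bool list. length xs = F})"
  have "bij_betw (\<lambda>f. restrict f S) ?A ?B"
  proof (rule bij_betw_byWitness[where f' = "\<lambda>g x. if x \<in> S then g x else []"])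
    show "\<forall>a'\<in>?B. restrict (\<lambda>x. if x \<in> S then a' x else []) S = a'"
      by (auto simp: fun_eq_iff PiE_def extensional_def)
  qed (auto simp: fun_eq_iff)
  then have "card ?A = card ?B" by (rule bij_betw_same_card)
  also have "\<dots> = (2 ^ F) ^ card S"
    using assms card_lists_length_eq[of "UNIV::bool set" F] by (simp add: card_PiE)
  finally show ?thesis by (simp add: power_mult)
qed

lemma finite_files: "finite (files L N)"
proof (rule finite_subset)
  show "files L N \<subseteq> {1..L} \<times> {..<Max (N ` {1..L})}"
  proof
    fix x assume "x \<in> files L N"
    then obtain i m where x: "x = (i, m)" "i \<in> {1..L}" "m < N i" unfolding files_def by auto
    have "N i \<le> Max (N ` {1..L})" using x by (intro Max_ge) auto
    then have "m < Max (N ` {1..L})" using x(3) by linarith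
    then show "x \<in> {1..L} \<times> {..<Max (N ` {1..L})}" using x by auto
  qed
qed auto

lemma card_libraries: "card (libraries L N F) = 2 ^ (F * card (files L N))"
  unfolding libraries_def using card_fixed_length_maps[OF finite_files] by simp

lemma finite_libraries: "finite (libraries L N F)"
  using card_libraries[of L N F] by (metis card.infinite power_not_zero zero_neq_numeral)

lemma card_bool_lists_length_le: "card {xs::bool list. length xs \<le> r} \<le> 2 ^ (r + 1)"
proof -
  have "card {xs::bool list. length xs \<le> r} = (\<Sum>i\<le>r. 2 ^ i)"
    using card_lists_length_le[of "UNIV::bool set" r] by simp
  also have "\<dots> \<le> 2 ^ (r + 1)" by (induction r) auto
  finally show ?thesis .
qed

lemma card_lists_of_bool_lists_le:
  "card {xss::bool list list. set xss \<subseteq> {xs. length xs \<le> r} \<and> length xss = q} \<le> 2 ^ ((r + 1) * q)"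
proof -
  have "finite {xs::bool list. length xs \<le> r}"
    using finite_lists_length_le[of "UNIV::bool set" r] by simp
  then have "card {xss::bool list list. set xss \<subseteq> {xs. length xs \<le> r} \<and> length xss = q}
      = card {xs::bool list. length xs \<le> r} ^ q"
    by (rule card_lists_length_eq)
  also have "\<dots> \<le> (2 ^ (r + 1)) ^ q" by (rule power_mono[OF card_bool_lists_length_le]) simp
  finally show ?thesis by (simp only: power_mult)
qed

lemma entropy_lib_restrict_le:
  assumes G: "G \<subseteq> libraries L N F" "finite G" "G \<noteq> {}" and S: "S \<subseteq> files L N"
  shows "entropy G (lib_restrict S) \<le> real F * real (card S)"
proof -
  have fS: "finite S" using S finite_files finite_subset by blast
  have "lib_restrict S ` G
      \<subseteq> {f::library. (\<forall>x\<in>S. length (f x) = F) \<and> (\<forall>x. x \<notin> S \<longrightarrow> f x = [])}"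
  proof
    fix f assume "f \<in> lib_restrict S ` G"
    then obtain l where l: "l \<in> G" "f = lib_restrict S l" by blast
    then have "\<forall>x\<in>files L N. length (l x) = F" using G(1) unfolding libraries_def by blast
    then show "f \<in> {f::library. (\<forall>x\<in>S. length (f x) = F) \<and> (\<forall>x. x \<notin> S \<longrightarrow> f x = [])}"
      using l S unfolding lib_restrict_def by auto
  qed
  then have "card (lib_restrict S ` G) \<le> 2 ^ (F * card S)"
    using card_mono[OF _ \<open>lib_restrict S ` G \<subseteq> _\<close>] card_fixed_length_maps[OF fS, of F]
    by (metis (no_types, lifting) card.infinite not_less_zero power_not_zero zero_neq_numeral
        card_gt_0_iff)
  moreover have "0 < card (lib_restrict S ` G)" using G by (simp add: card_gt_0_iff)
  ultimately have "log 2 (real (card (lib_restrict S ` G))) \<le> log 2 (2 ^ (F * card S))"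
    by (subst log_le_cancel_iff) (auto simp del: of_nat_power simp: of_nat_power[symmetric])
  then show ?thesis
    using entropy_le_log_card_image[OF G(2,3), of "lib_restrict S"] by (simp add: log_nat_power)
qed

lemma lib_restrict_files: "l \<in> libraries L N F \<Longrightarrow> lib_restrict (files L N) l = l"
  unfolding libraries_def lib_restrict_def by (auto simp: fun_eq_iff)

text \<open>On a set containing at least half of all libraries the files are still almost uniform and
  independent: revealing the files \<open>D\<close> costs at most one bit less than \<open>card D * F\<close>.\<close>

lemma entropy_lib_restrict_gain:
  assumes G: "G \<subseteq> libraries L N F" "finite G" "G \<noteq> {}"
    and half: "card (libraries L N F) \<le> 2 * card G"
    and SD: "S \<inter> D = {}" "S \<union> D \<subseteq> files L N"
  shows "real (card D) * real F - 1 \<le> entropy G (lib_restrict (S \<union> D)) - entropy G (lib_restrict S)"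
proof -
  define R where "R = files L N - (S \<union> D)"
  have fin: "finite S" "finite D" "finite R"
    using SD(2) finite_files[of L N] unfolding R_def by (auto intro: finite_subset)
  have card_files: "card (files L N) = card S + card D + card R"
  proof -
    have "card (S \<union> D) = card S + card D" using fin SD by (simp add: card_Un_disjoint)
    moreover have "card R = card (files L N) - card (S \<union> D)"
      unfolding R_def using fin SD by (simp add: card_Diff_subset)
    moreover have "card (S \<union> D) \<le> card (files L N)" using SD by (simp add: card_mono finite_files)
    ultimately show ?thesis by linarith
  qed
  have "inj_on (lib_restrict (files L N)) G"
    by (rule inj_onI) (metis G(1) lib_restrict_files subsetD)
  then have "log 2 (real (card G)) = entropy G (lib_restrict (files L N))"
    by (rule entropy_inj[OF G(2), symmetric])
  also have "\<dots> = entropy G (\<lambda>l. (lib_restrict (S \<union> D) l, lib_restrict R l))"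
    by (rule entropy_cong[OF G(2)]) (use SD in \<open>auto simp: lib_restrict_eq_iff R_def\<close>)
  also have "\<dots> \<le> entropy G (lib_restrict (S \<union> D)) + real F * real (card R)"
    using entropy_subadditive[OF G(2), of "lib_restrict (S \<union> D)" "lib_restrict R"]
      entropy_lib_restrict_le[OF G, of R]
    unfolding R_def by auto
  finally have upper:
    "log 2 (real (card G)) \<le> entropy G (lib_restrict (S \<union> D)) + real F * real (card R)" .
  have "real F * real (card (files L N)) = log 2 (real (card (libraries L N F)))"
    unfolding card_libraries by (simp add: log_nat_power)
  also have "\<dots> \<le> log 2 (2 * real (card G))"
  proof -
    have "real (card (libraries L N F)) \<le> 2 * real (card G)" using half by linarith
    then show ?thesis
      using G by (subst log_le_cancel_iff) (auto simp: card_libraries card_gt_0_iff)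
  qed
  also have "\<dots> = 1 + log 2 (real (card G))" using G by (simp add: log_mult card_gt_0_iff)
  finally show ?thesis
    using upper entropy_lib_restrict_le[OF G, of S] SD card_files by (simp add: algebra_simps)
qed

lemma cond_obs_entropy_decode_step:
  assumes G: "G \<subseteq> libraries L N F" "finite G" "G \<noteq> {}"
    and half: "card (libraries L N F) \<le> 2 * card G"
    and SD: "S \<inter> D = {}" "S \<union> D \<subseteq> files L N"
    and decodes: "\<forall>l1\<in>G. \<forall>l2\<in>G. (\<forall>j\<in>A. Y j l1 = Y j l2) \<longrightarrow> (\<forall>x\<in>D. l1 x = l2 x)"
  shows "real (card D) * real F - 1 + cond_obs_entropy G Y (S \<union> D) A \<le> cond_obs_entropy G Y S A"
proof -
  have "entropy G (\<lambda>l. (obs_on Y A l, lib_restrict S l))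
      = entropy G (\<lambda>l. (obs_on Y A l, lib_restrict (S \<union> D) l))"
    by (rule entropy_cong[OF G(2)]) (use decodes in \<open>auto simp: obs_on_eq_iff lib_restrict_eq_iff\<close>)
  then show ?thesis
    using entropy_lib_restrict_gain[OF G half SD] unfolding cond_obs_entropy_def by simp
qed

section \<open>The demand pattern\<close>

definition file_code :: "nat \<Rightarrow> nat \<Rightarrow> nat \<Rightarrow> nat \<Rightarrow> nat \<Rightarrow> nat \<Rightarrow> nat \<Rightarrow> nat \<Rightarrow> nat \<Rightarrow> nat" where
  "file_code s t b U a c a' \<beta> u = (((a * t + c) * s + a') * b + \<beta>) * U + u"

lemma file_code_digits:
  "file_code s t b U (f div U div b div s div t) (f div U div b div s mod t) (f div U div b mod s)
     (f div U mod b) (f mod U) = f"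
  unfolding file_code_def by (simp add: div_mult_mod_eq)

lemma file_code_first_digit_less:
  fixes f s t b U :: nat
  assumes "f < s * t * s * b * U"
  shows "f div U div b div s div t < s"
  using assms by (simp add: less_mult_imp_div_less mult.assoc mult.commute[of _ U] div_mult2_eq)

lemma mod_add_complement:
  fixes a s w :: nat
  assumes "a < s"
  shows "(w + (a + s - w mod s) mod s) mod s = a"
proof -
  have "w mod s < s" using assms by simp
  then have "w mod s + (a + s - w mod s) = a + s" by linarith
  then have "(w mod s + (a + s - w mod s)) mod s = a" using assms by simp
  then show ?thesis by (simp add: mod_add_left_eq mod_add_right_eq)
qed

lemma mod_diff_window_offsets:
  fixes P s w x x' :: nat
  assumes x: "x < s" "x' < s" and P: "2 * s \<le> P"
  shows "((w + x) mod P + s - 1 + P - (w + x') mod P) mod P = x + s - 1 - x'"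
proof -
  define Q where "Q = (w + x) mod P + s - 1 + P - (w + x') mod P"
  define A where "A = int (w + x)"
  define B where "B = int (w + x')"
  have "(w + x') mod P < P" "1 \<le> s" using x P by simp_all
  then have "int Q = int ((w + x) mod P) + int s - 1 + int P - int ((w + x') mod P)"
    unfolding Q_def by (simp add: of_nat_diff)
  also have "\<dots> = (A + int s - 1 + int P - B) + int P * (B div int P - A div int P)"
    unfolding A_def B_def zmod_int by (simp add: minus_mult_div_eq_mod[symmetric] algebra_simps)
  finally have "int Q mod int P = (A + int s - 1 + int P - B) mod int P" by simp
  also have "\<dots> = ((int x + int s - 1 - int x') + int P) mod int P"
    unfolding A_def B_def by (simp add: algebra_simps)
  also have "\<dots> = int x + int s - 1 - int x'"
    using x P by (simp add: mod_pos_pos_trivial)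
  finally have "int (Q mod P) = int (x + s - 1 - x')"
    using x by (simp add: zmod_int of_nat_diff)
  then show ?thesis unfolding Q_def by (simp only: of_nat_eq_iff)
qed

definition rounds :: "nat \<Rightarrow> nat \<Rightarrow> nat \<Rightarrow> (nat \<Rightarrow> nat) \<Rightarrow> nat" where
  "rounds K t L s = (K div t) * (\<Prod>i\<in>{1..L}. s i)"

text \<open>The caches form \<open>K div t\<close> groups of \<open>t\<close> consecutive caches, and round \<open>j\<close> uses the caches
  of group \<open>j mod (K div t)\<close>.  The \<open>\<beta>\<close>-th demand of round \<open>j\<close> asks user \<open>u\<close> of level \<open>i\<close> at cache
  \<open>k\<close> for the file with mixed-radix digits \<open>((j + e + 1) mod s i, k mod t, j mod s i, \<beta>, u)\<close>, where
  \<open>e = (k div t + s i - 1 - j) mod (K div t)\<close>; the final \<open>mod N i\<close> only keeps the demand admissible.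
  If \<open>k\<close> lies in the group of a round \<open>j\<^sub>0\<close> of the same window of \<open>s i\<close> rounds as \<open>j\<close>, the first
  digit is \<open>j\<^sub>0 mod s i\<close>, so the broadcasts and cache contents of one window serve
  \<open>s i * t * s i * b * U i\<close> distinct files.\<close>

definition round_demand ::
    "nat \<Rightarrow> nat \<Rightarrow> (nat \<Rightarrow> nat) \<Rightarrow> (nat \<Rightarrow> nat) \<Rightarrow> (nat \<Rightarrow> nat) \<Rightarrow> nat \<Rightarrow> nat \<Rightarrow> nat \<Rightarrow> demand" where
  "round_demand K t N U s b j \<beta> = (\<lambda>i k u.
     file_code (s i) t b (U i)
       ((j + (k div t + s i - 1 + K div t - j mod (K div t)) mod (K div t) + 1) mod s i)
       (k mod t) (j mod s i) \<beta> u mod N i)"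

definition round_obs ::
    "nat \<Rightarrow> nat \<Rightarrow> (nat \<Rightarrow> nat) \<Rightarrow> (nat \<Rightarrow> nat) \<Rightarrow> (nat \<Rightarrow> nat) \<Rightarrow> nat
     \<Rightarrow> (nat \<Rightarrow> library \<Rightarrow> bool list) \<Rightarrow> (demand \<Rightarrow> library \<Rightarrow> bool list)
     \<Rightarrow> nat \<Rightarrow> library \<Rightarrow> bool list list \<times> bool list list" where
  "round_obs K t N U s b \<phi> \<psi> j l =
     (map (\<lambda>\<beta>. \<psi> (round_demand K t N U s b j \<beta>) l) [0..<b],
      map (\<lambda>c. \<phi> ((j mod (K div t)) * t + c) l) [0..<t])"

lemma round_obs_eq_iff:
  "round_obs K t N U s b \<phi> \<psi> j l1 = round_obs K t N U s b \<phi> \<psi> j l2 \<longleftrightarrow>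
     (\<forall>\<beta><b. \<psi> (round_demand K t N U s b j \<beta>) l1 = \<psi> (round_demand K t N U s b j \<beta>) l2) \<and>
     (\<forall>c<t. \<phi> ((j mod (K div t)) * t + c) l1 = \<phi> ((j mod (K div t)) * t + c) l2)"
  unfolding round_obs_def by (auto simp: map_eq_conv)

definition decodable_files ::
    "nat \<Rightarrow> (nat \<Rightarrow> nat) \<Rightarrow> (nat \<Rightarrow> nat) \<Rightarrow> (nat \<Rightarrow> nat) \<Rightarrow> nat \<Rightarrow> nat \<Rightarrow> (nat \<times> nat) set" where
  "decodable_files t N U s b i = (\<lambda>f. (i, f)) ` {..<min (s i * t * s i * b * U i) (N i)}"

lemma decodable_files_subset: "i \<in> {1..L} \<Longrightarrow> decodable_files t N U s b i \<subseteq> files L N"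
  unfolding decodable_files_def files_def by auto

lemma decodable_files_disjoint: "i \<noteq> i' \<Longrightarrow> decodable_files t N U s b i \<inter> decodable_files t N U s b i' = {}"
  unfolding decodable_files_def by auto

lemma card_decodable_files_div:
  assumes "0 < s i" "0 < b"
  shows "real (card (decodable_files t N U s b i)) / real (s i)
    = real b * min (real (s i * t * U i)) (real (N i) / real (s i * b))"
proof -
  have "card (decodable_files t N U s b i) = min (s i * t * s i * b * U i) (N i)"
    unfolding decodable_files_def by (subst card_image) (auto simp: inj_on_def)
  then show ?thesis
    using assms by (simp add: of_nat_min min_divide_distrib_right min_mult_distrib_left field_simps)
qed

lemma decodable_files_gain_ge:
  assumes "1 \<le> s i" "1 \<le> b"
  shows "real F * real b * min (real (s i * t * U i)) (real (N i) / real (s i * b)) - 1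
    \<le> (real (card (decodable_files t N U s b i)) * real F - 1) / real (s i)"
proof -
  have "(real (card (decodable_files t N U s b i)) * real F - 1) / real (s i)
      = real F * (real (card (decodable_files t N U s b i)) / real (s i)) - 1 / real (s i)"
    by (simp add: diff_divide_distrib)
  also have "\<dots> = real F * real b * min (real (s i * t * U i)) (real (N i) / real (s i * b))
      - 1 / real (s i)"
    using assms by (simp add: card_decodable_files_div mult.assoc)
  finally show ?thesis using assms(1) by simp
qed

context
  fixes K L b t :: nat and N U s :: "nat \<Rightarrow> nat"
  assumes N_ge: "\<forall>i\<in>{1..L}. N i \<ge> K * U i"
    and t_pos: "1 \<le> t" and t_le: "t \<le> K"
    and s_range: "\<forall>i\<in>{1..L}. 1 \<le> s i \<and> s i \<le> K div (2 * t)"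
begin

lemma groups_pos: "0 < K div t"
  using t_pos t_le by (simp add: div_greater_zero_iff)

lemma two_s_le_groups:
  assumes "i \<in> {1..L}"
  shows "2 * s i \<le> K div t"
proof -
  have "2 * (K div (2 * t)) * t = (K div (2 * t)) * (2 * t)" by simp
  also have "\<dots> \<le> K" by simp
  finally have "2 * (K div (2 * t)) * t \<le> K" .
  then have "2 * (K div (2 * t)) \<le> K div t" using t_pos by (simp add: less_eq_div_iff_mult_less_eq)
  then show ?thesis using s_range assms by fastforce
qed

lemma rounds_pos: "0 < rounds K t L s"
  unfolding rounds_def using groups_pos s_range by (auto intro!: prod_pos)

lemma groups_dvd_rounds: "K div t dvd rounds K t L s"
  unfolding rounds_def by simp

lemma s_dvd_rounds: "i \<in> {1..L} \<Longrightarrow> s i dvd rounds K t L s"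
  unfolding rounds_def by (simp add: dvd_prodI)

lemma s_le_rounds: "i \<in> {1..L} \<Longrightarrow> s i \<le> rounds K t L s"
  using two_s_le_groups dvd_imp_le[OF groups_dvd_rounds rounds_pos] by fastforce

lemma group_cache_less:
  assumes "c < t"
  shows "(j mod (K div t)) * t + c < K"
proof -
  have "(j mod (K div t)) * t + c < (j mod (K div t) + 1) * t" using assms by simp
  also have "\<dots> \<le> (K div t) * t"
    using groups_pos by (intro mult_right_mono) (auto simp: Suc_le_eq)
  also have "\<dots> \<le> K" by (metis div_mult_mod_eq le_add1)
  finally show ?thesis .
qed

lemma round_demand_admissible: "admissible_demand K L N U (round_demand K t N U s b j \<beta>)"
  unfolding admissible_demand_def
proof (intro ballI allI impI)
  fix i k u assume "i \<in> {1..L}" "k < K" "u < U i"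
  then have "0 < K * U i" "K * U i \<le> N i" using N_ge by auto
  then have "0 < N i" by linarith
  then show "round_demand K t N U s b j \<beta> i k u < N i" unfolding round_demand_def by simp
qed

lemma round_demand_window:
  assumes i: "i \<in> {1..L}" and x: "x < s i" "x' < s i" and c: "c < t"
  shows "round_demand K t N U s b ((w + x') mod rounds K t L s) \<beta> i
      (((w + x) mod rounds K t L s mod (K div t)) * t + c) u
    = file_code (s i) t b (U i) ((w + x) mod s i) c ((w + x') mod s i) \<beta> u mod N i"
proof -
  define j' where "j' = (w + x') mod rounds K t L s"
  define k where "k = ((w + x) mod rounds K t L s mod (K div t)) * t + c"
  have k: "k div t = (w + x) mod (K div t)" "k mod t = c"
    unfolding k_def using c groups_dvd_rounds by (simp_all add: mod_mod_cancel)
  have j'_groups: "j' mod (K div t) = (w + x') mod (K div t)"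
    unfolding j'_def using groups_dvd_rounds by (simp add: mod_mod_cancel)
  have j'_s: "j' mod s i = (w + x') mod s i"
    unfolding j'_def using s_dvd_rounds[OF i] by (simp add: mod_mod_cancel)
  have offset: "(k div t + s i - 1 + K div t - j' mod (K div t)) mod (K div t) = x + s i - 1 - x'"
    unfolding k j'_groups using x two_s_le_groups[OF i] by (rule mod_diff_window_offsets)
  define d where "d = x + s i - x'"
  have "x + s i - 1 - x' + 1 = d" using x unfolding d_def by simp
  then have "(j' + (x + s i - 1 - x') + 1) mod s i = (j' + d) mod s i" by (simp only: add.assoc)
  also have "\<dots> = (w + x' + d) mod s i" using j'_s by (metis mod_add_left_eq)
  also have "w + x' + d = (w + x) + s i" using x unfolding d_def by simp
  finally have first: "(j' + (x + s i - 1 - x') + 1) mod s i = (w + x) mod s i" by simp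
  show ?thesis
    unfolding round_demand_def j'_def[symmetric] k_def[symmetric] offset first k(2) j'_s ..
qed

lemma round_demand_covers:
  assumes i: "i \<in> {1..L}" and f: "f < s i * t * s i * b * U i" "f < N i"
  obtains x x' \<beta> c u where "x < s i" "x' < s i" "\<beta> < b" "c < t" "u < U i"
    and "round_demand K t N U s b ((w + x') mod rounds K t L s) \<beta> i
           (((w + x) mod rounds K t L s mod (K div t)) * t + c) u = f"
proof -
  define a where "a = f div U i div b div s i div t"
  define a' where "a' = f div U i div b mod s i"
  define c where "c = f div U i div b div s i mod t"
  define \<beta> where "\<beta> = f div U i mod b"
  define u where "u = f mod U i"
  define x where "x = (a + s i - w mod s i) mod s i"
  define x' where "x' = (a' + s i - w mod s i) mod s i"
  have "0 < s i * t * s i * b * U i" using f(1) by linarith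
  then have pos: "0 < U i" "0 < b" "0 < s i" "0 < t" by (simp_all add: zero_less_mult_iff)
  have a: "a < s i" unfolding a_def using file_code_first_digit_less[OF f(1)] .
  have a': "a' < s i" unfolding a'_def using pos by simp
  have "x < s i" "x' < s i" "\<beta> < b" "c < t" "u < U i"
    unfolding x_def x'_def \<beta>_def c_def u_def using pos by simp_all
  moreover have "(w + x) mod s i = a" "(w + x') mod s i = a'"
    unfolding x_def x'_def using a a' by (simp_all add: mod_add_complement)
  ultimately have "round_demand K t N U s b ((w + x') mod rounds K t L s) \<beta> i
           (((w + x) mod rounds K t L s mod (K div t)) * t + c) u
      = file_code (s i) t b (U i) a c a' \<beta> u mod N i"
    using round_demand_window[OF i] by simp
  also have "\<dots> = f"
    using file_code_digits[of "s i" t b "U i" f] f(2) unfolding a_def a'_def c_def \<beta>_def u_def by simp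
  finally have "round_demand K t N U s b ((w + x') mod rounds K t L s) \<beta> i
           (((w + x) mod rounds K t L s mod (K div t)) * t + c) u = f" .
  with \<open>x < s i\<close> \<open>x' < s i\<close> \<open>\<beta> < b\<close> \<open>c < t\<close> \<open>u < U i\<close> show thesis by (rule that)
qed

context
  fixes M R :: real and F :: nat
    and \<phi> :: "nat \<Rightarrow> library \<Rightarrow> bool list" and \<psi> :: "demand \<Rightarrow> library \<Rightarrow> bool list"
    and \<mu> :: "demand \<Rightarrow> nat \<Rightarrow> nat \<Rightarrow> nat \<Rightarrow> bool list \<Rightarrow> bool list \<Rightarrow> bool list"
  assumes b_pos: "1 \<le> b" and M_nonneg: "0 \<le> M"
    and scheme: "caching_scheme K L N U F M R \<phi> \<psi> \<mu> (1 / (2 * real (rounds K t L s) * real b))"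
begin

definition good_libs :: "library set" where
  "good_libs = {l \<in> libraries L N F. \<forall>j<rounds K t L s. \<forall>\<beta><b.
     \<not> decoding_error K L U l \<phi> \<psi> \<mu> (round_demand K t N U s b j \<beta>)}"

lemma good_libs_subset: "good_libs \<subseteq> libraries L N F"
  unfolding good_libs_def by blast

lemma finite_good_libs: "finite good_libs"
  using finite_subset[OF good_libs_subset finite_libraries] .

lemma card_error_libraries_le:
  "real (card {l \<in> libraries L N F. decoding_error K L U l \<phi> \<psi> \<mu> (round_demand K t N U s b j \<beta>)})
    \<le> real (card (libraries L N F)) / (2 * real (rounds K t L s) * real b)"
proof -
  have "error_prob K L N U F \<phi> \<psi> \<mu> (round_demand K t N U s b j \<beta>)
      \<le> 1 / (2 * real (rounds K t L s) * real b)"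
    using scheme round_demand_admissible unfolding caching_scheme_def by blast
  moreover have "0 < card (libraries L N F)" unfolding card_libraries by simp
  ultimately show ?thesis unfolding error_prob_def by (simp add: divide_le_eq)
qed

text \<open>A union bound over the \<open>rounds * b\<close> demands of the pattern, each of which fails with
  probability at most \<open>1 / (2 * rounds * b)\<close>.\<close>

lemma card_libraries_le_twice_good: "card (libraries L N F) \<le> 2 * card good_libs"
proof -
  define E where "E j \<beta> = {l \<in> libraries L N F. decoding_error K L U l \<phi> \<psi> \<mu>
    (round_demand K t N U s b j \<beta>)}" for j \<beta>
  have "libraries L N F - good_libs \<subseteq> (\<Union>j<rounds K t L s. \<Union>\<beta><b. E j \<beta>)"
    unfolding good_libs_def E_def by blast
  then have "card (libraries L N F - good_libs) \<le> card (\<Union>j<rounds K t L s. \<Union>\<beta><b. E j \<beta>)"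
    by (intro card_mono) (auto simp: E_def finite_libraries)
  also have "\<dots> \<le> (\<Sum>j<rounds K t L s. \<Sum>\<beta><b. card (E j \<beta>))"
    by (intro order.trans[OF card_UN_le] sum_mono card_UN_le) simp_all
  finally have "real (card (libraries L N F - good_libs))
      \<le> (\<Sum>j<rounds K t L s. \<Sum>\<beta><b. real (card (E j \<beta>)))"
    by (simp flip: of_nat_sum)
  also have "\<dots> \<le> (\<Sum>j<rounds K t L s. \<Sum>\<beta><b.
      real (card (libraries L N F)) / (2 * real (rounds K t L s) * real b))"
    unfolding E_def by (intro sum_mono card_error_libraries_le)
  also have "\<dots> = real (card (libraries L N F)) / 2" using rounds_pos b_pos by simp
  finally show ?thesis
    using card_Diff_subset[OF finite_good_libs good_libs_subset]
      card_mono[OF finite_libraries good_libs_subset] by linarith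
qed

lemma good_libs_nonempty: "good_libs \<noteq> {}"
  using card_libraries_le_twice_good unfolding card_libraries by auto

lemma good_libs_decode:
  assumes i: "i \<in> {1..L}" and l: "l1 \<in> good_libs" "l2 \<in> good_libs"
    and obs: "\<forall>j\<in>cyc_window (rounds K t L s) w (s i).
      round_obs K t N U s b \<phi> \<psi> j l1 = round_obs K t N U s b \<phi> \<psi> j l2"
    and x: "x \<in> decodable_files t N U s b i"
  shows "l1 x = l2 x"
proof -
  obtain f where f: "x = (i, f)" "f < s i * t * s i * b * U i" "f < N i"
    using x unfolding decodable_files_def by auto
  obtain y y' \<beta> c u where y: "y < s i" "y' < s i" and "\<beta> < b" "c < t" "u < U i"
    and demand: "round_demand K t N U s b ((w + y') mod rounds K t L s) \<beta> i
      (((w + y) mod rounds K t L s mod (K div t)) * t + c) u = f"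
    using round_demand_covers[OF i f(2,3)] .
  define j where "j = (w + y) mod rounds K t L s"
  define j' where "j' = (w + y') mod rounds K t L s"
  define k where "k = (j mod (K div t)) * t + c"
  have "k < K" unfolding k_def using \<open>c < t\<close> by (rule group_cache_less)
  have decodes: "\<mu> (round_demand K t N U s b j' \<beta>) i k u
      (\<psi> (round_demand K t N U s b j' \<beta>) l) (\<phi> k l) = l (i, f)" if "l \<in> good_libs" for l
  proof -
    have "j' < rounds K t L s" unfolding j'_def using rounds_pos by simp
    then have "\<not> decoding_error K L U l \<phi> \<psi> \<mu> (round_demand K t N U s b j' \<beta>)"
      using that \<open>\<beta> < b\<close> unfolding good_libs_def by blast
    then have "\<mu> (round_demand K t N U s b j' \<beta>) i k u (\<psi> (round_demand K t N U s b j' \<beta>) l) (\<phi> k l)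
        = l (i, round_demand K t N U s b j' \<beta> i k u)"
      using i \<open>k < K\<close> \<open>u < U i\<close> unfolding decoding_error_def by blast
    then show ?thesis using demand unfolding j_def j'_def k_def by simp
  qed
  have "j \<in> cyc_window (rounds K t L s) w (s i)" "j' \<in> cyc_window (rounds K t L s) w (s i)"
    unfolding j_def j'_def cyc_window_def using y by auto
  then have "\<psi> (round_demand K t N U s b j' \<beta>) l1 = \<psi> (round_demand K t N U s b j' \<beta>) l2"
    "\<phi> k l1 = \<phi> k l2"
    using obs \<open>\<beta> < b\<close> \<open>c < t\<close> unfolding k_def round_obs_eq_iff by blast+
  then show ?thesis using decodes[OF l(1)] decodes[OF l(2)] f(1) by simp
qed

lemma card_round_obs_image_le:
  "card (round_obs K t N U s b \<phi> \<psi> j ` good_libs)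
    \<le> 2 ^ ((nat \<lfloor>R * real F\<rfloor> + 1) * b + (nat \<lfloor>M * real F\<rfloor> + 1) * t)"
proof -
  define r where "r = nat \<lfloor>R * real F\<rfloor>"
  define m where "m = nat \<lfloor>M * real F\<rfloor>"
  let ?Ab = "{xss::bool list list. set xss \<subseteq> {xs. length xs \<le> r} \<and> length xss = b}"
  let ?At = "{xss::bool list list. set xss \<subseteq> {xs. length xs \<le> m} \<and> length xss = t}"
  have sub: "round_obs K t N U s b \<phi> \<psi> j ` good_libs \<subseteq> ?Ab \<times> ?At"
  proof
    fix y assume "y \<in> round_obs K t N U s b \<phi> \<psi> j ` good_libs"
    then obtain l where l: "l \<in> libraries L N F" "y = round_obs K t N U s b \<phi> \<psi> j l"
      using good_libs_subset by blast
    have "length (\<psi> (round_demand K t N U s b j \<beta>) l) \<le> r" for \<beta>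
    proof -
      have "int (length (\<psi> (round_demand K t N U s b j \<beta>) l)) \<le> \<lfloor>R * real F\<rfloor>"
        using scheme round_demand_admissible l(1) unfolding caching_scheme_def by blast
      then show ?thesis unfolding r_def by linarith
    qed
    moreover have "length (\<phi> ((j mod (K div t)) * t + c) l) \<le> m" if "c < t" for c
    proof -
      have "int (length (\<phi> ((j mod (K div t)) * t + c) l)) \<le> \<lfloor>M * real F\<rfloor>"
        using scheme group_cache_less[OF that] l(1) unfolding caching_scheme_def by blast
      then show ?thesis unfolding m_def by linarith
    qed
    ultimately show "y \<in> ?Ab \<times> ?At" using l(2) unfolding round_obs_def by auto
  qed
  have "finite ?Ab" "finite ?At"
    using finite_lists_length_eq[of "{xs::bool list. length xs \<le> r}" b]
      finite_lists_length_eq[of "{xs::bool list. length xs \<le> m}" t]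
      finite_lists_length_le[of "UNIV::bool set" r] finite_lists_length_le[of "UNIV::bool set" m]
    by simp_all
  then have "card (round_obs K t N U s b \<phi> \<psi> j ` good_libs) \<le> card (?Ab \<times> ?At)"
    by (intro card_mono[OF _ sub]) simp
  also have "\<dots> = card ?Ab * card ?At" by (rule card_cartesian_product)
  also have "\<dots> \<le> 2 ^ ((r + 1) * b) * 2 ^ ((m + 1) * t)"
    by (intro mult_mono card_lists_of_bool_lists_le) simp_all
  finally show ?thesis unfolding r_def m_def by (simp add: power_add)
qed

lemma entropy_round_obs_le:
  "entropy good_libs (round_obs K t N U s b \<phi> \<psi> j) \<le> real b * (R * real F + 1) + real t * (M * real F + 1)"
proof -
  define r where "r = nat \<lfloor>R * real F\<rfloor>"
  define m where "m = nat \<lfloor>M * real F\<rfloor>"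
  obtain l where "l \<in> libraries L N F" using good_libs_nonempty good_libs_subset by blast
  then have "int (length (\<psi> (round_demand K t N U s b j 0) l)) \<le> \<lfloor>R * real F\<rfloor>"
    using scheme round_demand_admissible unfolding caching_scheme_def by blast
  then have "real r \<le> R * real F" unfolding r_def by linarith
  have "real m \<le> M * real F" unfolding m_def using M_nonneg by simp
  have "0 < card (round_obs K t N U s b \<phi> \<psi> j ` good_libs)"
    using good_libs_nonempty finite_good_libs by (simp add: card_gt_0_iff)
  then have "log 2 (real (card (round_obs K t N U s b \<phi> \<psi> j ` good_libs)))
      \<le> log 2 (2 ^ ((r + 1) * b + (m + 1) * t))"
    using card_round_obs_image_le[of j] unfolding r_def[symmetric] m_def[symmetric]
    by (subst log_le_cancel_iff) (auto simp del: of_nat_power simp: of_nat_power[symmetric])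
  also have "\<dots> = real b * (real r + 1) + real t * (real m + 1)"
    by (simp add: log_nat_power algebra_simps)
  also have "\<dots> \<le> real b * (R * real F + 1) + real t * (M * real F + 1)"
    using \<open>real r \<le> R * real F\<close> \<open>real m \<le> M * real F\<close> by (intro add_mono mult_left_mono) auto
  finally have "log 2 (real (card (round_obs K t N U s b \<phi> \<psi> j ` good_libs)))
      \<le> real b * (R * real F + 1) + real t * (M * real F + 1)" .
  then show ?thesis
    using entropy_le_log_card_image[OF finite_good_libs good_libs_nonempty] by (meson order_trans)
qed

lemma cond_obs_entropy_singleton_window:
  assumes "w < rounds K t L s"
  shows "cond_obs_entropy good_libs (round_obs K t N U s b \<phi> \<psi>) {} (cyc_window (rounds K t L s) w 1)
    \<le> entropy good_libs (round_obs K t N U s b \<phi> \<psi> w)"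
proof -
  have "cyc_window (rounds K t L s) w 1 = {w}" unfolding cyc_window_def using assms by force
  moreover have "entropy good_libs (\<lambda>l. (obs_on (round_obs K t N U s b \<phi> \<psi>) {w} l, lib_restrict {} l))
      = entropy good_libs (round_obs K t N U s b \<phi> \<psi> w)"
    by (rule entropy_cong[OF finite_good_libs]) (simp add: obs_on_eq_iff lib_restrict_eq_iff)
  ultimately show ?thesis
    unfolding cond_obs_entropy_def using entropy_nonneg[OF finite_good_libs, of "lib_restrict {}"]
    by simp
qed

lemma sum_level_gains_le_obs_entropy:
  "(\<Sum>i=1..L. real (rounds K t L s) * (real (card (decodable_files t N U s b i)) * real F - 1) / real (s i))
    \<le> real (rounds K t L s) * (real b * (R * real F + 1) + real t * (M * real F + 1))"
proof -
  define h where "h = cond_obs_entropy good_libs (round_obs K t N U s b \<phi> \<psi>)"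
  define T where "T = decodable_files t N U s b"
  define levels where "levels = sort_key s [1..<Suc L]"
  have levels: "distinct levels" "sorted (map s levels)" "set levels = {1..L}"
    unfolding levels_def by (auto simp: distinct_sort)
  have "(\<Sum>i\<leftarrow>levels. real (rounds K t L s) * (real (card (T i)) * real F - 1) / real (s i))
      \<le> (\<Sum>w<rounds K t L s. h {} (cyc_window (rounds K t L s) w 1)) / real 1"
  proof (rule sum_level_gains_le_window_average[where I = "{1..L}"
        and c = "\<lambda>i. real (card (T i)) * real F - 1"])
    show "real (card (T i)) * real F - 1 + h (S \<union> T i) (cyc_window (rounds K t L s) w (s i))
        \<le> h S (cyc_window (rounds K t L s) w (s i))"
      if "i \<in> {1..L}" "S \<subseteq> \<Union> (T ` ({1..L} - {i}))" "w < rounds K t L s" for S i w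
    proof -
      have "S \<inter> T i = {}" "S \<union> T i \<subseteq> files L N"
        using that(1,2) decodable_files_disjoint decodable_files_subset unfolding T_def by blast+
      moreover have "\<forall>l1\<in>good_libs. \<forall>l2\<in>good_libs.
          (\<forall>j\<in>cyc_window (rounds K t L s) w (s i).
            round_obs K t N U s b \<phi> \<psi> j l1 = round_obs K t N U s b \<phi> \<psi> j l2)
          \<longrightarrow> (\<forall>x\<in>T i. l1 x = l2 x)"
        unfolding T_def using good_libs_decode[OF that(1)] by blast
      ultimately show ?thesis
        unfolding h_def
        by (rule cond_obs_entropy_decode_step[OF good_libs_subset finite_good_libs
              good_libs_nonempty card_libraries_le_twice_good])
    qed
  qed (use levels s_range s_le_rounds in \<open>auto simp: h_def finite_good_libs
      cond_obs_entropy_submodular cond_obs_entropy_empty cond_obs_entropy_nonneg\<close>)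
  also have "\<dots> = (\<Sum>w<rounds K t L s. h {} (cyc_window (rounds K t L s) w 1))" by simp
  also have "\<dots> \<le> (\<Sum>w<rounds K t L s. real b * (R * real F + 1) + real t * (M * real F + 1))"
    unfolding h_def
    by (intro sum_mono order.trans[OF cond_obs_entropy_singleton_window entropy_round_obs_le]) simp_all
  finally show ?thesis
    using levels unfolding T_def by (simp add: sum_list_distinct_conv_sum_set)
qed

lemma scheme_rate_lower_bound:
  assumes F: "0 < F"
  shows "real b * (\<Sum>i=1..L. min (real (s i * t * U i)) (real (N i) / real (s i * b)))
    \<le> real b * R + real t * M + (real b + real t + real L) / real F"
proof -
  define m where "m i = min (real (s i * t * U i)) (real (N i) / real (s i * b))" for i
  have "real (rounds K t L s) * (real F * real b * m i - 1)
      \<le> real (rounds K t L s) * (real (card (decodable_files t N U s b i)) * real F - 1) / real (s i)"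
    if "i \<in> {1..L}" for i
    unfolding times_divide_eq_right[symmetric] m_def using s_range that b_pos
    by (intro mult_left_mono decodable_files_gain_ge) auto
  then have "real (rounds K t L s) * (\<Sum>i=1..L. real F * real b * m i - 1)
      \<le> (\<Sum>i=1..L. real (rounds K t L s) * (real (card (decodable_files t N U s b i)) * real F - 1)
           / real (s i))"
    unfolding sum_distrib_left by (rule sum_mono)
  also have "\<dots> \<le> real (rounds K t L s) * (real b * (R * real F + 1) + real t * (M * real F + 1))"
    by (rule sum_level_gains_le_obs_entropy)
  finally have "(\<Sum>i=1..L. real F * real b * m i - 1)
      \<le> real b * (R * real F + 1) + real t * (M * real F + 1)"
    using rounds_pos by (simp add: mult_le_cancel_left_pos)
  moreover have "(\<Sum>i=1..L. real F * real b * m i - 1) = real F * (real b * (\<Sum>i=1..L. m i)) - real L"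
    by (simp add: sum_subtractf sum_distrib_left mult.assoc)
  ultimately have "real F * (real b * (\<Sum>i=1..L. m i))
      \<le> real F * (real b * R + real t * M) + (real b + real t + real L)"
    by (simp add: algebra_simps)
  then have "real b * (\<Sum>i=1..L. m i)
      \<le> (real F * (real b * R + real t * M) + (real b + real t + real L)) / real F"
    using F by (simp add: le_divide_eq mult.commute)
  also have "\<dots> = real b * R + real t * M + (real b + real t + real L) / real F"
    using F by (simp add: add_divide_distrib)
  finally show ?thesis unfolding m_def .
qed

end

end

section \<open>The optimal rate\<close>

lemma le_of_forall_le_add_divide:
  fixes x y C :: real
  assumes "\<And>F::nat. Fmin \<le> F \<Longrightarrow> 0 < F \<Longrightarrow> x \<le> y + C / real F"
  shows "x \<le> y"
proof (rule field_le_epsilon)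
  fix \<delta> :: real assume "0 < \<delta>"
  define F where "F = max Fmin (nat \<lceil>\<bar>C\<bar> / \<delta>\<rceil> + 1)"
  have "Fmin \<le> F" "0 < F" unfolding F_def by auto
  have "\<bar>C\<bar> / \<delta> \<le> real F"
    unfolding F_def using real_nat_ceiling_ge[of "\<bar>C\<bar> / \<delta>"] by linarith
  then have "C / real F \<le> \<delta>"
    using \<open>0 < \<delta>\<close> \<open>0 < F\<close> by (simp add: divide_le_eq pos_divide_le_eq mult.commute abs_le_iff)
  then show "x \<le> y + \<delta>" using assms[OF \<open>Fmin \<le> F\<close> \<open>0 < F\<close>] by linarith
qed

lemma take_drop_concat_map:
  assumes "\<forall>x\<in>set xs. length (g x) = F" and "p < length xs"
  shows "take F (drop (F * p) (concat (map g xs))) = g (xs ! p)"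
  using assms
proof (induction xs arbitrary: p)
  case Nil then show ?case by simp
next
  case (Cons y ys)
  then show ?case by (cases p) (simp_all add: algebra_simps)
qed

lemma uncoded_decoding:
  assumes fs: "set fs = files L N" and d: "admissible_demand K L N U d" and l: "l \<in> libraries L N F"
    and "i \<in> {1..L}" "k < K" "u < U i"
  shows "take F (drop (F * (SOME p. p < length fs \<and> fs ! p = (i, d i k u))) (concat (map l fs)))
    = l (i, d i k u)"
proof -
  have "(i, d i k u) \<in> set fs"
    using assms unfolding admissible_demand_def files_def by auto
  then have "\<exists>p. p < length fs \<and> fs ! p = (i, d i k u)" by (metis in_set_conv_nth)
  then have p: "(SOME p. p < length fs \<and> fs ! p = (i, d i k u)) < length fs"
    "fs ! (SOME p. p < length fs \<and> fs ! p = (i, d i k u)) = (i, d i k u)"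
    by (metis (mono_tags, lifting) someI_ex)+
  have "\<forall>x\<in>set fs. length (l x) = F" using l fs unfolding libraries_def by auto
  then show ?thesis using take_drop_concat_map[OF _ p(1)] p(2) by simp
qed

text \<open>Broadcasting all files uncoded achieves a finite rate; this makes \<open>opt_rate\<close> an infimum over
  a nonempty set.\<close>

lemma achievable_uncoded:
  assumes "0 \<le> M"
  shows "achievable K L N U (real (card (files L N))) M"
proof -
  obtain fs where fs: "set fs = files L N" "distinct fs"
    using finite_distinct_list[OF finite_files] by blast
  define \<psi> where "\<psi> d l = concat (map l fs)" for d :: demand and l :: library
  define \<mu> where "\<mu> F d i k u X Z = take F (drop (F * (SOME p. p < length fs \<and> fs ! p = (i, d i k u))) X)"
    for d :: demand and i k u :: nat and X Z :: "bool list" and F :: nat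
  have "caching_scheme K L N U F M (real (card (files L N))) (\<lambda>k l. []) \<psi> (\<mu> F) eps"
    if "0 < eps" for eps :: real and F :: nat
  proof -
    have no_error: "{l \<in> libraries L N F. decoding_error K L U l (\<lambda>k l. []) \<psi> (\<mu> F) d} = {}"
      if "admissible_demand K L N U d" for d
      using uncoded_decoding[OF fs(1) that] unfolding decoding_error_def \<psi>_def \<mu>_def by auto
    have "error_prob K L N U F (\<lambda>k l. []) \<psi> (\<mu> F) d \<le> eps" if "admissible_demand K L N U d" for d
      unfolding error_prob_def no_error[OF that] using \<open>0 < eps\<close> by simp
    moreover have "length (\<psi> d l) = F * card (files L N)" if "l \<in> libraries L N F" for d l
    proof -
      have "length (\<psi> d l) = (\<Sum>x\<in>set fs. length (l x))"
        unfolding \<psi>_def using fs(2) by (simp add: length_concat sum_list_distinct_conv_sum_set)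
      also have "\<dots> = (\<Sum>x\<in>files L N. F)"
        using that fs(1) unfolding libraries_def by (intro sum.cong) auto
      finally show ?thesis by simp
    qed
    ultimately show ?thesis
      unfolding caching_scheme_def using assms by (simp add: mult.commute flip: of_nat_mult)
  qed
  then show ?thesis unfolding achievable_def by blast
qed

lemma achievable_rate_lower_bound:
  assumes N_ge: "\<forall>i\<in>{1..L}. N i \<ge> K * U i"
    and b: "1 \<le> b" and t: "1 \<le> t" "t \<le> K"
    and s: "\<forall>i\<in>{1..L}. 1 \<le> s i \<and> s i \<le> K div (2 * t)"
    and M: "0 \<le> M"
    and R: "achievable K L N U R M"
  shows "(\<Sum>i=1..L. min (real (s i * t * U i)) (real (N i) / real (s i * b))) - real t / real b * M \<le> R"
    (is "?T - _ \<le> R")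
proof -
  define eps where "eps = 1 / (2 * real (rounds K t L s) * real b)"
  have "0 < eps" unfolding eps_def using rounds_pos[OF N_ge t s] b by simp
  then obtain Fmin where Fmin: "\<forall>F\<ge>Fmin. \<exists>\<phi> \<psi> \<mu>. caching_scheme K L N U F M R \<phi> \<psi> \<mu> eps"
    using R unfolding achievable_def by blast
  show ?thesis
  proof (rule le_of_forall_le_add_divide[where Fmin = Fmin and C = "(real b + real t + real L) / real b"])
    fix F :: nat assume "Fmin \<le> F" "0 < F"
    then obtain \<phi> \<psi> \<mu>
      where "caching_scheme K L N U F M R \<phi> \<psi> \<mu> (1 / (2 * real (rounds K t L s) * real b))"
      using Fmin unfolding eps_def by blast
    then have "real b * ?T \<le> real b * R + real t * M + (real b + real t + real L) / real F"
      by (rule scheme_rate_lower_bound[OF N_ge t s b M _ \<open>0 < F\<close>])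
    moreover have "real b * (?T - real t / real b * M) = real b * ?T - real t * M"
      using b by (simp add: algebra_simps)
    moreover have "real b * (R + (real b + real t + real L) / real b / real F)
        = real b * R + (real b + real t + real L) / real F"
    proof -
      have "real b * (C / real b / real F) = C / real F" for C using b by simp
      then show ?thesis by (simp only: distrib_left)
    qed
    ultimately have "real b * (?T - real t / real b * M)
        \<le> real b * (R + (real b + real t + real L) / real b / real F)"
      by linarith
    then show "?T - real t / real b * M \<le> R + (real b + real t + real L) / real b / real F"
      using b by simp
  qed
qed

theorem lemma4:
  fixes K L b t :: nat and N U s :: "nat \<Rightarrow> nat" and M :: real
  assumes "\<forall>i\<in>{1..L}. N i \<ge> K * U i"
    and "\<forall>i\<in>{1..L}. \<forall>j\<in>{1..L}. i \<noteq> j \<and> real (U i) / real (N i) \<ge> real (U j) / real (N j)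
           \<longrightarrow> real (U i) / real (N i) \<ge> 6400 * (real (U j) / real (N j))"
    and "b \<ge> 1"
    and "1 \<le> t" and "t \<le> K"
    and "\<forall>i\<in>{1..L}. 1 \<le> s i \<and> s i \<le> K div (2 * t)"
    and "M \<ge> 0"
  shows "opt_rate K L N U M \<ge>
           (\<Sum>i=1..L. min (real (s i * t * U i)) (real (N i) / real (s i * b)))
           - real t / real b * M"
proof -
  have "{R. achievable K L N U R M} \<noteq> {}" using achievable_uncoded[OF assms(7)] by blast
  then show ?thesis
    unfolding opt_rate_def
    by (rule cInf_greatest) (use achievable_rate_lower_bound[OF assms(1,3-7)] in blast)
qed

end
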